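(* Let $0<s<r<1$ and let $P$ be a compact packing of the plane by discs of radii $1$, $r$, $s$. Then the coding of the corona of every $s$-disc of $P$ is, up to cyclic rotation and reversal, either $\mathrm{ssssss}$ or one of the following $55$ words: rrrrr, rrrrs, rrrss, rrsrs, rrrr, rrsss, rsrss, rrrs, rrr, rrss, 11111, 1111s, 111ss, 11s1s, 1111, 11sss, 1s1ss, 111s, 111, 11ss, 1111r, 111rs, 11rss, 11srs, 111r, 1rsss, 1srss, 11rs, 11r, 1rss, 111rr, 11r1s, 1r1ss, 1rs1s, 11rr, 1r1s, 1rr, 11r1r, 11rrs, 1rrss, 1rsrs, 1r1r, 1rrs, 11rrr, 1r1rs, r1rss, rrs1s, 1rrr, r1rs, 1r1rr, 1rr1s, 1rrrr, 1rrrs, r11rs, r1rrs.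
   Context: A packing is a set of discs in the plane with pairwise disjoint interiors; it is compact if its contact graph (centers as vertices, edges between tangent discs) is a triangulation of the plane. For $x\in\{1,r,s\}$, an $x$-disc is a disc of radius $x$. The corona of a disc $D$ in a compact packing is the set of discs tangent to $D$; its coding is the cyclic word over the alphabet $\{1,r,s\}$ obtained by listing the radii of these discs in angular order around $D$ (consecutive letters correspond to tangent discs). Codings are considered up to cyclic rotation and reversal. *)

theory Defs
  imports "HOL-Analysis.Analysis"
begin

type_synonym disc = "complex \<times> real"

definition center :: "disc \<Rightarrow> complex" where "center D = fst D"
definition radius :: "disc \<Rightarrow> real" where "radius D = snd D"

definition packing :: "disc set \<Rightarrow> bool" where
  "packing P \<longleftrightarrow> (\<forall>D\<in>P. radius D > 0) \<and>
     (\<forall>D\<in>P. \<forall>E\<in>P. D \<noteq> E \<longrightarrow>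
        ball (center D) (radius D) \<inter> ball (center E) (radius E) = {})"

definition tangent :: "disc \<Rightarrow> disc \<Rightarrow> bool" where
  "tangent D E \<longleftrightarrow> D \<noteq> E \<and> dist (center D) (center E) = radius D + radius E"

definition contact_drawing :: "disc set \<Rightarrow> complex set" where
  "contact_drawing P = center ` P \<union>
     (\<Union>{closed_segment (center D) (center E) | D E. D \<in> P \<and> E \<in> P \<and> tangent D E})"

definition face_triangle :: "disc set \<Rightarrow> disc \<Rightarrow> disc \<Rightarrow> disc \<Rightarrow> bool" where
  "face_triangle P A B C \<longleftrightarrow> A \<in> P \<and> B \<in> P \<and> C \<in> P \<and>
     tangent A B \<and> tangent B C \<and> tangent A C \<and>
     interior (convex hull {center A, center B, center C}) \<inter> contact_drawing P = {}"

text \<open>Compact packing: the contact graph is a triangulation of the plane, i.e. the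
plane is covered by the closed triangular faces of the contact graph (equivalently,
every face of the planar straight-line drawing of the contact graph is a triangle).\<close>
definition compact_packing :: "disc set \<Rightarrow> bool" where
  "compact_packing P \<longleftrightarrow> packing P \<and>
     (\<forall>z::complex. \<exists>A B C. face_triangle P A B C \<and>
        z \<in> convex hull {center A, center B, center C})"

definition corona :: "disc set \<Rightarrow> disc \<Rightarrow> disc set" where
  "corona P D = {E \<in> P. tangent D E}"

definition corona_in_angular_order :: "disc set \<Rightarrow> disc \<Rightarrow> disc list \<Rightarrow> bool" where
  "corona_in_angular_order P D L \<longleftrightarrow> distinct L \<and> set L = corona P D \<and>
     sorted_wrt (\<lambda>E F. Arg (center E - center D) < Arg (center F - center D)) L"

definition coding :: "disc list \<Rightarrow> real list" where
  "coding L = map radius L"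

definition cyc_equiv :: "'a list \<Rightarrow> 'a list \<Rightarrow> bool" where
  "cyc_equiv u v \<longleftrightarrow> (\<exists>n. rotate n u = v \<or> rotate n (rev u) = v)"

definition letter :: "real \<Rightarrow> real \<Rightarrow> char \<Rightarrow> real" where
  "letter r s c = (if c = CHR ''1'' then 1 else if c = CHR ''r'' then r else s)"

definition word :: "real \<Rightarrow> real \<Rightarrow> string \<Rightarrow> real list" where
  "word r s w = map (letter r s) w"

definition s_corona_words :: "string list" where
  "s_corona_words = [''ssssss'',
    ''rrrrr'', ''rrrrs'', ''rrrss'', ''rrsrs'', ''rrrr'', ''rrsss'', ''rsrss'', ''rrrs'',
    ''rrr'', ''rrss'', ''11111'', ''1111s'', ''111ss'', ''11s1s'', ''1111'', ''11sss'',
    ''1s1ss'', ''111s'', ''111'', ''11ss'', ''1111r'', ''111rs'', ''11rss'', ''11srs'',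
    ''111r'', ''1rsss'', ''1srss'', ''11rs'', ''11r'', ''1rss'', ''111rr'', ''11r1s'',
    ''1r1ss'', ''1rs1s'', ''11rr'', ''1r1s'', ''1rr'', ''11r1r'', ''11rrs'', ''1rrss'',
    ''1rsrs'', ''1r1r'', ''1rrs'', ''11rrr'', ''1r1rs'', ''r1rss'', ''rrs1s'', ''1rrr'',
    ''r1rs'', ''1r1rr'', ''1rr1s'', ''1rrrr'', ''1rrrs'', ''r11rs'', ''r1rrs'']"

end

theory Submission
  imports Defs
begin

text \<open>Let \<open>D\<close> be an \<open>s\<close>-disc of a compact packing.  Its corona is finite, and because the
  contact graph is a triangulation, angularly consecutive neighbours of \<open>D\<close> are tangent
  and subtend an angle less than \<open>\<pi>\<close> at the centre of \<open>D\<close>.  By the law of cosines in the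
  triangle of centres this angle is exactly \<open>\<pi>/3\<close> between two \<open>s\<close>-discs, lies in
  \<open>(\<pi>/3, \<pi>/2)\<close> when exactly one of them is an \<open>s\<close>-disc, and in \<open>(\<pi>/3, \<pi>)\<close> otherwise.
  Since the angles add up to \<open>2\<pi>\<close>, the corona is either \<open>ssssss\<close> or a word of length at
  most five satisfying a counting condition, and the finitely many such words are checked
  against the list by evaluation.\<close>

section \<open>Angles modulo \<open>2\<pi>\<close> and cyclic gaps\<close>

lemma sin_add_2pi_multiple: "sin (x + 2 * pi * of_int k) = sin x"
  by (simp add: sin_add mult.assoc[symmetric])

lemma eq_if_diff_2pi_multiple:
  fixes x y :: real and k :: int
  assumes "-pi < x" "x \<le> pi" "-pi < y" "y \<le> pi" "x - y = 2 * pi * of_int k"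
  shows "x = y"
proof -
  have "\<bar>2 * pi * of_int k\<bar> < 2 * pi" using assms by auto
  then have "\<bar>of_int k :: real\<bar> < 1" by (simp add: abs_mult)
  then have "k = 0" by linarith
  then show ?thesis using assms by simp
qed

lemma sin_pos_imp_less_pi:
  fixes x :: real
  assumes "0 \<le> x" "x < 2 * pi" "sin x > 0"
  shows "0 < x \<and> x < pi"
proof -
  have "\<not> pi \<le> x" using sin_le_zero[of x] assms by linarith
  then show ?thesis using assms by (cases "x = 0") auto
qed

lemma sin_pos_lift:
  fixes x :: real
  assumes "sin x > 0"
  obtains k :: int where "0 < x + 2 * pi * of_int k" "x + 2 * pi * of_int k < pi"
proof -
  define k where "k = - \<lfloor>x / (2 * pi)\<rfloor>"
  have "of_int (-k) \<le> x / (2 * pi)" "x / (2 * pi) < of_int (-k) + 1"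
    unfolding k_def by linarith+
  then have "0 \<le> x + 2 * pi * of_int k" "x + 2 * pi * of_int k < 2 * pi"
    by (auto simp: field_simps)
  moreover have "sin (x + 2 * pi * of_int k) > 0"
    using assms by (simp only: sin_add_2pi_multiple)
  ultimately show ?thesis using that sin_pos_imp_less_pi by blast
qed

lemma lift_short_arc:
  fixes a b \<phi> :: real
  assumes "sin (b - a) > 0" "sin (\<phi> - a) > 0" "sin (b - \<phi>) > 0"
  obtains ka kb :: int where "a + 2 * pi * of_int ka < \<phi>" "\<phi> < b + 2 * pi * of_int kb"
    "b + 2 * pi * of_int kb - (a + 2 * pi * of_int ka) < pi"
proof -
  obtain k1 :: int where k1: "0 < \<phi> - a + 2 * pi * of_int k1" "\<phi> - a + 2 * pi * of_int k1 < pi"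
    using sin_pos_lift[OF assms(2)] by blast
  obtain kb :: int where kb: "0 < b - \<phi> + 2 * pi * of_int kb" "b - \<phi> + 2 * pi * of_int kb < pi"
    using sin_pos_lift[OF assms(3)] by blast
  define d where "d = b + 2 * pi * of_int kb - (a + 2 * pi * of_int (- k1))"
  have "d = (b - a) + 2 * pi * of_int (kb + k1)" unfolding d_def by (simp add: algebra_simps)
  then have "sin d > 0" using assms(1) by (simp only: sin_add_2pi_multiple)
  moreover have "0 \<le> d" "d < 2 * pi" using k1 kb unfolding d_def by auto
  ultimately have "d < pi" using sin_pos_imp_less_pi by blast
  then show ?thesis using that[of "- k1" kb] k1 kb unfolding d_def by auto
qed

lemma sin_diff_2pi_multiples:
  fixes x y x' y' :: real and k l :: int
  assumes "x' = x + 2 * pi * of_int k" "y' = y + 2 * pi * of_int l"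
  shows "sin (x' - y') = sin (x - y)"
proof -
  have "x' - y' = (x - y) + 2 * pi * of_int (k - l)" using assms by (simp add: algebra_simps)
  then show ?thesis by (simp only: sin_add_2pi_multiple)
qed

definition cyclic_gap :: "('a \<Rightarrow> real) \<Rightarrow> 'a list \<Rightarrow> nat \<Rightarrow> real" where
  "cyclic_gap \<alpha> L i =
     (if i + 1 < length L then \<alpha> (L!(i+1)) - \<alpha> (L!i) else \<alpha> (L!0) + 2 * pi - \<alpha> (L!i))"

lemma sum_cyclic_gap:
  assumes "L \<noteq> []"
  shows "(\<Sum>i<length L. cyclic_gap \<alpha> L i) = 2 * pi"
proof -
  obtain k where k: "length L = Suc k" using assms by (cases "length L") auto
  have "(\<Sum>i<length L. cyclic_gap \<alpha> L i) = (\<Sum>i<k. \<alpha> (L!Suc i) - \<alpha> (L!i)) + cyclic_gap \<alpha> L k"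
    unfolding k by (simp add: cyclic_gap_def k)
  also have "(\<Sum>i<k. \<alpha> (L!Suc i) - \<alpha> (L!i)) = \<alpha> (L!k) - \<alpha> (L!0)"
    by (rule sum_lessThan_telescope)
  finally show ?thesis by (simp add: cyclic_gap_def k)
qed

lemma cyclic_gap_next:
  assumes "i < length L"
  shows "\<alpha> (L!((i+1) mod length L)) =
           \<alpha> (L!i) + cyclic_gap \<alpha> L i - (if i + 1 < length L then 0 else 2 * pi)"
proof (cases "i + 1 < length L")
  case False
  then have "i + 1 = length L" using assms by linarith
  then have "(i + 1) mod length L = 0" by simp
  then show ?thesis using False by (simp add: cyclic_gap_def)
qed (simp add: cyclic_gap_def)

lemma cos_cyclic_gap:
  assumes "i < length L"
  shows "cos (cyclic_gap \<alpha> L i) = cos (\<alpha> (L!((i+1) mod length L)) - \<alpha> (L!i))"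
  using cyclic_gap_next[OF assms, of \<alpha>] by (simp add: cos_diff)

context
  fixes \<alpha> :: "'a \<Rightarrow> real" and L :: "'a list"
  assumes angle_range: "\<And>G. G \<in> set L \<Longrightarrow> -pi < \<alpha> G \<and> \<alpha> G \<le> pi"
    and sorted_angles: "sorted_wrt (\<lambda>E F. \<alpha> E < \<alpha> F) L"
begin

lemma inj_on_sorted_angles: "inj_on \<alpha> (set L)"
proof -
  have "sorted_wrt (<) (map \<alpha> L)" using sorted_angles by (simp add: sorted_wrt_map)
  then show ?thesis by (simp add: strict_sorted_iff distinct_map)
qed

lemma sorted_angle_less:
  assumes "j < l" "l < length L"
  shows "\<alpha> (L!j) < \<alpha> (L!l)"
  using sorted_wrt_nth_less[OF sorted_angles assms] .

lemma sorted_angle_le: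
  assumes "j \<le> l" "l < length L"
  shows "\<alpha> (L!j) \<le> \<alpha> (L!l)"
  using sorted_angle_less[of j l] assms by (cases "j = l") auto

lemma cyclic_gap_pos:
  assumes "i < length L"
  shows "0 < cyclic_gap \<alpha> L i"
  using assms sorted_angle_less[of i "i+1"] angle_range[OF nth_mem, of 0] angle_range[OF nth_mem, of i]
  by (cases "L = []") (auto simp: cyclic_gap_def)

lemma not_in_cyclic_gap:
  assumes i: "i < length L" and G: "G \<in> set L"
  shows "\<not> (\<alpha> (L!i) < \<alpha> G + 2 * pi * of_int k \<and> \<alpha> G + 2 * pi * of_int k < \<alpha> (L!i) + cyclic_gap \<alpha> L i)"
proof
  assume H: "\<alpha> (L!i) < \<alpha> G + 2 * pi * of_int k \<and> \<alpha> G + 2 * pi * of_int k < \<alpha> (L!i) + cyclic_gap \<alpha> L i"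
  obtain j where j: "j < length L" "G = L!j" using G by (metis in_set_conv_nth)
  have rj: "-pi < \<alpha> G" "\<alpha> G \<le> pi" using angle_range[OF G] by auto
  have ri: "-pi < \<alpha> (L!i)" "\<alpha> (L!i) \<le> pi" using angle_range i by auto
  consider "k = 0" | "k \<ge> 1" | "k \<le> -1" by linarith
  then show False
  proof cases
    case 1
    then show False
      using H sorted_angle_le[of j i] sorted_angle_le[of "i+1" j] sorted_angle_le[of 0 j] i j
      by (cases "j \<le> i") (auto simp: cyclic_gap_def)
  next
    case 2
    have "2 * pi * 1 \<le> 2 * pi * of_int k" using 2 by (intro mult_left_mono) auto
    moreover have "\<alpha> (L!i) + cyclic_gap \<alpha> L i \<le> \<alpha> G + 2 * pi"
      using angle_range[of "L!(i+1)"] sorted_angle_le[of 0 j] rj i j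
      by (cases "i + 1 < length L") (auto simp: cyclic_gap_def)
    ultimately show False using H by linarith
  next
    case 3
    have "2 * pi * of_int k \<le> 2 * pi * (-1)" using 3 by (intro mult_left_mono) auto
    then show False using H rj ri by linarith
  qed
qed

lemma empty_arc_eq_cyclic_gap:
  assumes i: "i < length L" and EF: "E \<in> set L" "F \<in> set L"
    and tE: "tE = \<alpha> E + 2 * pi * of_int kE" and tF: "tF = \<alpha> F + 2 * pi * of_int kF"
    and arc: "tE < \<phi>" "\<phi> < tF" "tF - tE < pi"
    and gap: "\<alpha> (L!i) < \<phi>" "\<phi> < \<alpha> (L!i) + cyclic_gap \<alpha> L i"
    and empty: "\<forall>G\<in>set L. \<not> (sin (\<alpha> G - \<alpha> E) > 0 \<and> sin (\<alpha> F - \<alpha> G) > 0)"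
  shows "E = L!i \<and> F = L!((i+1) mod length L) \<and> tF - tE = cyclic_gap \<alpha> L i"
proof -
  define N where "N = L!((i+1) mod length L)"
  define lo where "lo = \<alpha> (L!i)"
  define hi where "hi = lo + cyclic_gap \<alpha> L i"
  have Li: "L!i \<in> set L" and N: "N \<in> set L" using i by (auto simp: N_def intro!: nth_mem mod_less_divisor)
  obtain m :: int where hiN: "hi = \<alpha> N + 2 * pi * of_int m"
    using cyclic_gap_next[OF i, of \<alpha>] that[of 0] that[of 1]
    unfolding hi_def lo_def N_def by (auto split: if_splits)
  have "tE \<le> lo" using not_in_cyclic_gap[OF i EF(1), of kE] arc gap unfolding tE hi_def lo_def by auto
  have "hi \<le> tF" using not_in_cyclic_gap[OF i EF(2), of kF] arc gap unfolding tF hi_def lo_def by auto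
  have "tE = lo"
  proof (rule ccontr)
    assume "tE \<noteq> lo"
    then have "sin (lo - tE) > 0" "sin (tF - lo) > 0"
      using \<open>tE \<le> lo\<close> \<open>hi \<le> tF\<close> arc gap by (auto simp: lo_def hi_def intro!: sin_gt_zero)
    moreover have "sin (lo - tE) = sin (\<alpha> (L!i) - \<alpha> E)" "sin (tF - lo) = sin (\<alpha> F - \<alpha> (L!i))"
      by (rule sin_diff_2pi_multiples[where k = 0 and l = kE] sin_diff_2pi_multiples[where k = kF and l = 0];
          simp add: lo_def tE tF)+
    ultimately show False using empty Li by auto
  qed
  have "tF = hi"
  proof (rule ccontr)
    assume "tF \<noteq> hi"
    then have "sin (hi - tE) > 0" "sin (tF - hi) > 0"
      using \<open>tE \<le> lo\<close> \<open>hi \<le> tF\<close> arc gap by (auto simp: lo_def hi_def intro!: sin_gt_zero)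
    moreover have "sin (hi - tE) = sin (\<alpha> N - \<alpha> E)" "sin (tF - hi) = sin (\<alpha> F - \<alpha> N)"
      by (rule sin_diff_2pi_multiples[where k = m and l = kE] sin_diff_2pi_multiples[where k = kF and l = m];
          simp add: hiN tE tF)+
    ultimately show False using empty N by auto
  qed
  have "\<alpha> E = \<alpha> (L!i)"
    using eq_if_diff_2pi_multiple[of "\<alpha> (L!i)" "\<alpha> E" kE] angle_range[OF Li] angle_range[OF EF(1)]
      \<open>tE = lo\<close> unfolding tE lo_def by auto
  then have "E = L!i" using inj_onD[OF inj_on_sorted_angles _ EF(1) Li] by simp
  moreover have "\<alpha> F = \<alpha> N"
    using eq_if_diff_2pi_multiple[of "\<alpha> N" "\<alpha> F" "kF - m"] angle_range[OF N] angle_range[OF EF(2)]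
      \<open>tF = hi\<close> hiN unfolding tF by (auto simp: algebra_simps)
  then have "F = N" using inj_onD[OF inj_on_sorted_angles _ EF(2) N] by simp
  ultimately show ?thesis using \<open>tE = lo\<close> \<open>tF = hi\<close> unfolding N_def hi_def by simp
qed

text \<open>Applied to the midpoint \<open>\<phi>\<close> of a gap, \<open>cone\<close> yields an empty arc around \<open>\<phi>\<close>;
  as no angle lies inside the gap, that arc is exactly the gap.\<close>
lemma cyclic_gap_consecutive:
  assumes cone: "\<And>\<phi>. (\<forall>G\<in>set L. \<forall>k::int. \<alpha> G \<noteq> \<phi> + 2 * pi * of_int k) \<Longrightarrow>
      \<exists>E\<in>set L. \<exists>F\<in>set L. T E F \<and>
        sin (\<alpha> F - \<alpha> E) > 0 \<and> sin (\<phi> - \<alpha> E) > 0 \<and> sin (\<alpha> F - \<phi>) > 0 \<and>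
        (\<forall>G\<in>set L. \<not> (sin (\<alpha> G - \<alpha> E) > 0 \<and> sin (\<alpha> F - \<alpha> G) > 0))"
    and i: "i < length L"
  shows "T (L!i) (L!((i+1) mod length L)) \<and> cyclic_gap \<alpha> L i < pi"
proof -
  define \<phi> where "\<phi> = \<alpha> (L!i) + cyclic_gap \<alpha> L i / 2"
  have gap: "\<alpha> (L!i) < \<phi>" "\<phi> < \<alpha> (L!i) + cyclic_gap \<alpha> L i"
    using cyclic_gap_pos[OF i] by (auto simp: \<phi>_def)
  have "\<forall>G\<in>set L. \<forall>k::int. \<alpha> G \<noteq> \<phi> + 2 * pi * of_int k"
  proof (intro ballI allI notI)
    fix G k assume G: "G \<in> set L" and "\<alpha> G = \<phi> + 2 * pi * of_int k"
    then have "\<alpha> G + 2 * pi * of_int (-k) = \<phi>" by simp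
    then show False using not_in_cyclic_gap[OF i G, of "-k"] gap by simp
  qed
  then obtain E F where EF: "E \<in> set L" "F \<in> set L" "T E F"
    and sEF: "sin (\<alpha> F - \<alpha> E) > 0" "sin (\<phi> - \<alpha> E) > 0" "sin (\<alpha> F - \<phi>) > 0"
    and empty: "\<forall>G\<in>set L. \<not> (sin (\<alpha> G - \<alpha> E) > 0 \<and> sin (\<alpha> F - \<alpha> G) > 0)"
    using cone by blast
  obtain kE kF :: int where "\<alpha> E + 2 * pi * of_int kE < \<phi>" "\<phi> < \<alpha> F + 2 * pi * of_int kF"
    "\<alpha> F + 2 * pi * of_int kF - (\<alpha> E + 2 * pi * of_int kE) < pi"
    using lift_short_arc[OF sEF] by blast
  from empty_arc_eq_cyclic_gap[OF i EF(1,2) refl refl this gap empty]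
  show ?thesis using EF(3) \<open>\<alpha> F + 2 * pi * of_int kF - (\<alpha> E + 2 * pi * of_int kE) < pi\<close> by auto
qed

end

section \<open>Orientation in the plane\<close>

definition cross :: "complex \<Rightarrow> complex \<Rightarrow> real" where
  "cross u v = Im (cnj u * v)"

lemma cross_anti: "cross u v = - cross v u"
  unfolding cross_def by (simp add: algebra_simps)

lemma cross_self [simp]: "cross u u = 0"
  unfolding cross_def by (simp add: algebra_simps)

lemma cross_add_right: "cross u (v + x) = cross u v + cross u x"
  and cross_add_left: "cross (v + x) u = cross v u + cross x u"
  and cross_of_real_mult_right: "cross u (of_real a * v) = a * cross u v"
  and cross_of_real_mult_left: "cross (of_real a * v) u = a * cross v u"
  unfolding cross_def by (simp_all add: algebra_simps)

lemmas cross_bilinear =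
  cross_add_right cross_add_left cross_of_real_mult_right cross_of_real_mult_left

lemma cross_decomposition:
  "of_real (cross u v) * w = of_real (cross w v) * u + of_real (cross u w) * v"
  unfolding cross_def by (simp add: complex_eq_iff algebra_simps)

lemma cross_rcis: "cross (rcis m a) (rcis n b) = m * n * sin (b - a)"
  unfolding cross_def by (simp add: sin_diff algebra_simps)

lemma cross_rcis_pos_iff:
  assumes "m > 0" "n > 0"
  shows "cross (rcis m a) (rcis n b) > 0 \<longleftrightarrow> sin (b - a) > 0"
proof -
  have "0 < m * n" using assms by simp
  then show ?thesis by (metis cross_rcis mult_pos_pos zero_less_mult_pos)
qed

lemma law_of_cosines_Arg:
  assumes "u \<noteq> 0" "v \<noteq> 0"
  shows "cos (Arg v - Arg u) = ((cmod u)\<^sup>2 + (cmod v)\<^sup>2 - (cmod (u - v))\<^sup>2) / (2 * cmod u * cmod v)"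
proof -
  have "Re (cnj (rcis (cmod u) (Arg u)) * rcis (cmod v) (Arg v)) = cmod u * cmod v * cos (Arg v - Arg u)"
    by (simp add: cos_diff algebra_simps)
  then have "Re (cnj u * v) = cmod u * cmod v * cos (Arg v - Arg u)" by (simp only: rcis_cmod_Arg)
  moreover have "(cmod (u - v))\<^sup>2 = (cmod u)\<^sup>2 + (cmod v)\<^sup>2 - 2 * Re (cnj u * v)"
    unfolding cmod_power2 by (simp add: power2_eq_square algebra_simps)
  ultimately show ?thesis using assms by (simp add: field_simps)
qed

lemma noncollinear_imp_cross_nonzero:
  assumes "\<not> collinear {a, b, c}"
  shows "cross (b - a) (c - a) \<noteq> 0"
proof
  assume cr: "cross (b - a) (c - a) = 0"
  define u where "u = b - a"
  define v where "v = c - a"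
  have "u \<noteq> 0" using assms unfolding u_def by (auto simp: collinear_2)
  then have N: "(Re u)\<^sup>2 + (Im u)\<^sup>2 > 0"
    by (metis complex_eq_iff sum_power2_gt_zero_iff zero_complex.sel)
  have c: "Re u * Im v = Im u * Re v" using cr unfolding cross_def u_def v_def by (simp add: algebra_simps)
  have "Re v * ((Re u)\<^sup>2 + (Im u)\<^sup>2) = (Re u * Re v + Im u * Im v) * Re u"
    "Im v * ((Re u)\<^sup>2 + (Im u)\<^sup>2) = (Re u * Re v + Im u * Im v) * Im u"
    using c by algebra+
  then have "v = ((Re u * Re v + Im u * Im v) / ((Re u)\<^sup>2 + (Im u)\<^sup>2)) *\<^sub>R u"
    using N by (auto simp: complex_eq_iff eq_divide_eq)
  then have "collinear {0, u, v}" unfolding collinear_lemma by blast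
  then have "collinear {b, a, c}" using collinear_3[of b a c] unfolding u_def v_def by simp
  then show False using assms by (simp add: insert_commute)
qed

section \<open>Packings and their faces\<close>

lemma tangent_sym: "tangent D E \<longleftrightarrow> tangent E D"
  unfolding tangent_def by (auto simp: dist_commute)

lemma packing_radius_pos: "packing P \<Longrightarrow> D \<in> P \<Longrightarrow> 0 < radius D"
  unfolding packing_def by auto

lemma packing_dist_ge:
  assumes "packing P" "D \<in> P" "E \<in> P" "D \<noteq> E"
  shows "radius D + radius E \<le> dist (center D) (center E)"
proof (rule ccontr)
  assume H: "\<not> ?thesis"
  define a where "a = center D" define b where "b = center E"
  define rD where "rD = radius D" define rE where "rE = radius E"
  have pos: "rD > 0" "rE > 0" using assms packing_radius_pos unfolding rD_def rE_def by auto
  have H': "dist a b < rD + rE" using H unfolding a_def b_def rD_def rE_def by simp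
  text \<open>The point dividing the segment of centres in the ratio of the radii lies in both discs.\<close>
  define p where "p = a + (rD / (rD + rE)) *\<^sub>R (b - a)"
  have "p \<in> ball a rD"
  proof -
    have "dist a p = rD / (rD + rE) * dist a b"
      unfolding p_def dist_norm using pos by (simp add: norm_minus_commute)
    also have "\<dots> < rD / (rD + rE) * (rD + rE)" using H' pos by (intro mult_strict_left_mono) auto
    finally show ?thesis using pos by (simp add: mem_ball)
  qed
  moreover have "p \<in> ball b rE"
  proof -
    have "1 - rD / (rD + rE) = rE / (rD + rE)" using pos by (simp add: field_simps)
    moreover have "p - b = (1 - rD / (rD + rE)) *\<^sub>R (a - b)" unfolding p_def by (simp add: algebra_simps)
    ultimately have "dist p b = rE / (rD + rE) * dist a b" unfolding dist_norm using pos by simp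
    also have "\<dots> < rE / (rD + rE) * (rD + rE)" using H' pos by (intro mult_strict_left_mono) auto
    finally show ?thesis using pos by (simp add: mem_ball dist_commute)
  qed
  moreover have "ball a rD \<inter> ball b rE = {}"
    using assms unfolding packing_def a_def b_def rD_def rE_def by auto
  ultimately show False by auto
qed

text \<open>The segment is covered by the two tangent discs.\<close>
lemma packing_segment_avoids_disc:
  assumes "packing P" "D \<in> P" "A \<in> P" "B \<in> P" "D \<noteq> A" "D \<noteq> B" "tangent A B"
    and p: "p \<in> closed_segment (center A) (center B)"
  shows "radius D \<le> dist p (center D)"
proof -
  have "dist (center A) p + dist p (center B) = dist (center A) (center B)"
    using p between_mem_segment[of "center A" "center B" p] between[of "center A" "center B" p]
    by simp
  then have "dist p (center A) \<le> radius A \<or> dist p (center B) \<le> radius B"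
    using assms(7) unfolding tangent_def by (auto simp: dist_commute)
  moreover have "radius D + radius X \<le> dist p (center D) + dist p (center X)" if "X \<in> {A, B}" for X
    using packing_dist_ge[OF assms(1,2), of X] that assms(3-6) dist_triangle[of "center D" "center X" p]
    by (auto simp: dist_commute)
  ultimately show ?thesis by fastforce
qed

lemma tangent_triple_noncollinear:
  assumes "packing P" "A \<in> P" "B \<in> P" "C \<in> P" "tangent A B" "tangent B C" "tangent A C"
  shows "\<not> collinear {center A, center B, center C}"
proof
  assume "collinear {center A, center B, center C}"
  then have "between (center B, center C) (center A) \<or> between (center C, center A) (center B) \<or>
      between (center A, center B) (center C)" by (simp add: collinear_between_cases)
  moreover have "radius A > 0" "radius B > 0" "radius C > 0"
    using assms packing_radius_pos by auto
  ultimately show False using assms(5-7) by (auto simp: between tangent_def dist_commute)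
qed

lemma face_triangle_swap12: "face_triangle P A B C \<Longrightarrow> face_triangle P B A C"
  and face_triangle_swap23: "face_triangle P A B C \<Longrightarrow> face_triangle P A C B"
  unfolding face_triangle_def by (auto simp: tangent_sym insert_commute)

lemma face_triangle_noncollinear:
  "packing P \<Longrightarrow> face_triangle P A B C \<Longrightarrow> \<not> collinear {center A, center B, center C}"
  unfolding face_triangle_def using tangent_triple_noncollinear by blast

text \<open>Otherwise the disc, being connected with its centre outside the open face, would
  cross an edge of the face.\<close>
lemma face_triangle_meets_disc:
  assumes pk: "packing P" and D: "D \<in> P" and f: "face_triangle P A B C"
    and z: "z \<in> convex hull {center A, center B, center C}" "dist z (center D) < radius D"
  shows "D \<in> {A, B, C}"
proof (rule ccontr)
  assume nD: "D \<notin> {A, B, C}"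
  define T where "T = convex hull {center A, center B, center C}"
  define S where "S = ball (center D) (radius D)"
  have ABC: "A \<in> P" "B \<in> P" "C \<in> P" "tangent A B" "tangent B C" "tangent A C"
    and emp: "interior T \<inter> contact_drawing P = {}"
    using f unfolding face_triangle_def T_def by auto
  have "center D \<in> contact_drawing P" using D unfolding contact_drawing_def by auto
  then have "center D \<notin> interior T" using emp by blast
  moreover have "center D \<in> S" using packing_radius_pos[OF pk D] unfolding S_def by simp
  moreover have "S \<subseteq> T \<Longrightarrow> S \<subseteq> interior T" unfolding S_def by (simp add: interior_maximal)
  ultimately have "\<not> S \<subseteq> T" by blast
  moreover have "S \<inter> T \<noteq> {}" using z unfolding S_def T_def by (auto simp: dist_commute)
  ultimately obtain p where p: "p \<in> S" "p \<in> frontier T"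
    using connected_Int_frontier[of S T] unfolding S_def by auto
  have "closed T" unfolding T_def by (intro compact_imp_closed compact_convex_hull) auto
  then have pT: "p \<in> T" "p \<notin> interior T" using p(2) unfolding frontier_def by auto
  obtain u v w where uvw: "0 \<le> u" "0 \<le> v" "0 \<le> w" "u + v + w = 1"
    "p = u *\<^sub>R center A + v *\<^sub>R center B + w *\<^sub>R center C"
    using pT(1) unfolding T_def convex_hull_3 by auto
  have "\<not> (0 < u \<and> 0 < v \<and> 0 < w)"
    using pT(2) uvw face_triangle_noncollinear[OF pk f]
    unfolding T_def interior_convex_hull_3_minimal[OF face_triangle_noncollinear[OF pk f] DIM_complex]
    by blast
  then consider "u = 0" | "v = 0" | "w = 0" using uvw by linarith
  then have "p \<in> closed_segment (center B) (center C) \<or> p \<in> closed_segment (center A) (center C) \<or>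
      p \<in> closed_segment (center A) (center B)"
  proof cases
    case 1
    then show ?thesis unfolding closed_segment_def using uvw by (intro disjI1 CollectI exI[of _ w]) auto
  next
    case 2
    then show ?thesis unfolding closed_segment_def using uvw by (intro disjI2 disjI1 CollectI exI[of _ w]) auto
  next
    case 3
    then show ?thesis unfolding closed_segment_def using uvw by (intro disjI2 CollectI exI[of _ v]) auto
  qed
  moreover have "dist p (center D) < radius D" using p(1) unfolding S_def by (simp add: dist_commute)
  ultimately show False
    using packing_segment_avoids_disc[OF pk D ABC(2,3) _ _ ABC(5), of p]
      packing_segment_avoids_disc[OF pk D ABC(1,3) _ _ ABC(6), of p]
      packing_segment_avoids_disc[OF pk D ABC(1,2) _ _ ABC(4), of p] nD
    by force
qed

text \<open>A face triangle at \<open>D\<close> contains a neighbourhood of \<open>D\<close> in its angle, so an edge from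
  \<open>D\<close> strictly inside that angle would enter the empty face.\<close>
lemma face_triangle_separates_corona:
  assumes pk: "packing P" and f: "face_triangle P D E F"
    and k: "cross (center E - center D) (center F - center D) > 0"
    and G: "G \<in> corona P D"
  shows "\<not> (cross (center E - center D) (center G - center D) > 0 \<and>
            cross (center G - center D) (center F - center D) > 0)"
proof
  assume "cross (center E - center D) (center G - center D) > 0 \<and>
          cross (center G - center D) (center F - center D) > 0"
  moreover define u where "u = center E - center D"
  moreover define v where "v = center F - center D"
  moreover define x where "x = center G - center D"
  ultimately have c: "cross u v > 0" "cross u x > 0" "cross x v > 0" using k by auto
  define t where "t = 1 / (2 * (cross u v + cross x v + cross u x))"
  have t: "t > 0" "t * cross u v > 0" "t * cross x v > 0" "t * cross u x > 0"
    using c unfolding t_def by auto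
  have "t * (cross u v + cross x v + cross u x) = 1 / 2" using c unfolding t_def by simp
  then have tsum: "t * cross u v + t * cross x v + t * cross u x = 1 / 2" by (simp add: distrib_left)
  define q where "q = center D + of_real (t * cross u v) * x"
  have "q = center D + of_real t * (of_real (cross x v) * u + of_real (cross u x) * v)"
    unfolding q_def cross_decomposition[symmetric] by (simp add: mult.assoc)
  then have "q \<in> interior (convex hull {center D, center E, center F})"
    unfolding interior_convex_hull_3_minimal[OF face_triangle_noncollinear[OF pk f] DIM_complex]
    using t tsum
    by (intro CollectI exI[of _ "1 - t * cross x v - t * cross u x"] exI[of _ "t * cross x v"]
          exI[of _ "t * cross u x"])
       (auto simp: u_def v_def scaleR_conv_of_real algebra_simps)
  moreover have "q \<in> closed_segment (center D) (center G)"
    unfolding closed_segment_def using t tsum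
    by (intro CollectI exI[of _ "t * cross u v"]) (auto simp: q_def x_def scaleR_conv_of_real algebra_simps)
  then have "q \<in> contact_drawing P"
    using f G unfolding face_triangle_def corona_def contact_drawing_def by blast
  ultimately show False using f unfolding face_triangle_def by blast
qed

lemma face_triangle_at_disc:
  assumes cp: "compact_packing P" and D: "D \<in> P" and z: "dist z (center D) < radius D"
  obtains E F where "face_triangle P D E F" "cross (center E - center D) (center F - center D) > 0"
    "z \<in> convex hull {center D, center E, center F}"
proof -
  have pk: "packing P" using cp unfolding compact_packing_def by simp
  obtain A B C where f: "face_triangle P A B C" "z \<in> convex hull {center A, center B, center C}"
    using cp unfolding compact_packing_def by blast
  then have "D \<in> {A, B, C}" using face_triangle_meets_disc[OF pk D] z by blast
  then obtain E F where f': "face_triangle P D E F" "z \<in> convex hull {center D, center E, center F}"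
  proof (elim insertE emptyE)
    assume "D = A" then show ?thesis using that f by blast
  next
    assume "D = B" then show ?thesis
      using that[of A C] f face_triangle_swap12[OF f(1)] by (simp add: insert_commute)
  next
    assume "D = C" then show ?thesis
      using that[of A B] f face_triangle_swap12[OF face_triangle_swap23[OF f(1)]]
      by (simp add: insert_commute)
  qed
  have "cross (center E - center D) (center F - center D) \<noteq> 0"
    using noncollinear_imp_cross_nonzero face_triangle_noncollinear[OF pk f'(1)] by blast
  then consider "cross (center E - center D) (center F - center D) > 0"
    | "cross (center F - center D) (center E - center D) > 0"
    using cross_anti[of "center F - center D"] by fastforce
  then show ?thesis
  proof cases
    case 1
    then show ?thesis using that f' by blast
  next
    case 2
    then show ?thesis using that[of F E] f' face_triangle_swap23[OF f'(1)] by (simp add: insert_commute)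
  qed
qed

text \<open>Take the face containing a point near the centre of \<open>D\<close> in direction \<open>w\<close>.\<close>
lemma corona_cone_around_direction:
  assumes cp: "compact_packing P" and D: "D \<in> P" and w: "w \<noteq> 0"
    and nd: "\<forall>G\<in>corona P D. \<forall>l>0. w \<noteq> of_real l * (center G - center D)"
  shows "\<exists>E\<in>corona P D. \<exists>F\<in>corona P D. tangent E F \<and>
    cross (center E - center D) (center F - center D) > 0 \<and>
    cross (center E - center D) w > 0 \<and> cross w (center F - center D) > 0 \<and>
    (\<forall>G\<in>corona P D. \<not> (cross (center E - center D) (center G - center D) > 0 \<and>
                          cross (center G - center D) (center F - center D) > 0))"
proof -
  have pk: "packing P" using cp unfolding compact_packing_def by simp
  have rho: "radius D > 0" using packing_radius_pos[OF pk D] .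
  define \<epsilon> where "\<epsilon> = radius D / (2 * cmod w)"
  have \<epsilon>: "\<epsilon> > 0" using rho w unfolding \<epsilon>_def by auto
  define z where "z = center D + of_real \<epsilon> * w"
  have "dist z (center D) = radius D / 2"
    using w rho unfolding z_def dist_norm \<epsilon>_def by (simp add: norm_mult norm_divide)
  then have "dist z (center D) < radius D" using rho by simp
  then obtain E F where f: "face_triangle P D E F"
    and k: "cross (center E - center D) (center F - center D) > 0"
    and zT: "z \<in> convex hull {center D, center E, center F}"
    using face_triangle_at_disc[OF cp D] by blast
  have EF: "E \<in> corona P D" "F \<in> corona P D" "tangent E F"
    using f unfolding face_triangle_def corona_def by auto
  define u where "u = center E - center D"
  define v where "v = center F - center D"
  obtain x y t where xyt: "0 \<le> y" "0 \<le> t" "x + y + t = 1"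
    "z = x *\<^sub>R center D + y *\<^sub>R center E + t *\<^sub>R center F"
    using zT unfolding convex_hull_3 by auto
  have key: "of_real \<epsilon> * w = of_real y * u + of_real t * v"
  proof -
    have "x = 1 - y - t" using xyt by simp
    then show ?thesis
      using xyt(4)[unfolded \<open>x = 1 - y - t\<close>] unfolding z_def u_def v_def by (simp add: scaleR_conv_of_real algebra_simps)
  qed
  have not_ray: "of_real \<epsilon> * w \<noteq> of_real c * d" if "c \<ge> 0" "d \<in> {u, v}" for c d
  proof
    assume eq: "of_real \<epsilon> * w = of_real c * d"
    then have "c \<noteq> 0" using \<epsilon> w by auto
    then have "c / \<epsilon> > 0" using that(1) \<epsilon> by simp
    moreover have "w = of_real (c / \<epsilon>) * d" using eq \<epsilon> by (simp add: field_simps)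
    ultimately show False using nd EF that(2) unfolding u_def v_def by blast
  qed
  have yt: "y > 0" "t > 0"
    using not_ray[of t v] not_ray[of y u] key xyt by (auto simp: less_le)
  have "\<epsilon> * cross u w = t * cross u v" "\<epsilon> * cross w v = y * cross u v"
    using arg_cong[OF key, of "cross u"] arg_cong[OF key, of "\<lambda>x. cross x v"]
    by (simp_all add: cross_bilinear)
  then have "cross u w > 0" "cross w v > 0"
    using yt \<epsilon> k unfolding u_def v_def by (metis mult_pos_pos zero_less_mult_pos)+
  then show ?thesis
    using EF k face_triangle_separates_corona[OF pk f k] unfolding u_def v_def by blast
qed

section \<open>Coronas\<close>

definition angle_at :: "disc \<Rightarrow> disc \<Rightarrow> real" where
  "angle_at D G = Arg (center G - center D)"

lemma corona_in_angular_order_iff: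
  "corona_in_angular_order P D L \<longleftrightarrow>
     distinct L \<and> set L = corona P D \<and> sorted_wrt (\<lambda>E F. angle_at D E < angle_at D F) L"
  unfolding corona_in_angular_order_def angle_at_def ..

lemma norm_corona_vector:
  assumes "G \<in> corona P D"
  shows "cmod (center G - center D) = radius D + radius G"
  using assms unfolding corona_def tangent_def by (simp add: dist_norm norm_minus_commute)

lemma corona_vector_nonzero:
  assumes "packing P" "D \<in> P" "G \<in> corona P D"
  shows "center G - center D \<noteq> 0"
proof -
  have "G \<in> P" using assms(3) unfolding corona_def by simp
  then have "0 < radius D + radius G" using packing_radius_pos[OF assms(1)] assms(2) by (simp add: add_pos_pos)
  then show ?thesis using norm_corona_vector[OF assms(3)] by auto
qed

lemma inj_on_angle_at_corona:
  assumes pk: "packing P" and D: "D \<in> P"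
  shows "inj_on (angle_at D) (corona P D)"
proof (rule inj_onI, rule ccontr)
  fix E F assume E: "E \<in> corona P D" and F: "F \<in> corona P D"
    and eq: "angle_at D E = angle_at D F" and ne: "E \<noteq> F"
  have EP: "E \<in> P" "F \<in> P" using E F unfolding corona_def by auto
  define \<theta> where "\<theta> = angle_at D E"
  have "center X - center D = rcis (radius D + radius X) \<theta>" if "X \<in> {E, F}" for X
    using rcis_cmod_Arg[of "center X - center D"] norm_corona_vector[of X P D] E F eq that
    unfolding \<theta>_def angle_at_def by auto
  then have "center E - center F = rcis (radius E - radius F) \<theta>"
    by (simp add: rcis_def algebra_simps)
  then have "dist (center E) (center F) = \<bar>radius E - radius F\<bar>" by (simp add: dist_norm)
  moreover have "radius E + radius F \<le> dist (center E) (center F)"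
    using packing_dist_ge[OF pk EP ne] .
  moreover have "radius E > 0" "radius F > 0" using packing_radius_pos[OF pk] EP by auto
  ultimately show False by linarith
qed

text \<open>Centres of the corona lie in a bounded region and are \<open>2\<rho>\<close> apart.\<close>
lemma finite_corona:
  assumes pk: "packing P" and D: "D \<in> P" and \<rho>: "0 < \<rho>"
    and bounds: "\<And>G. G \<in> P \<Longrightarrow> \<rho> \<le> radius G \<and> radius G \<le> R"
  shows "finite (corona P D)"
proof (rule ccontr)
  assume inf: "infinite (corona P D)"
  have CP: "G \<in> P" if "G \<in> corona P D" for G using that unfolding corona_def by simp
  have sep: "2 * \<rho> \<le> dist (center G1) (center G2)"
    if "G1 \<in> corona P D" "G2 \<in> corona P D" "G1 \<noteq> G2" for G1 G2
    using packing_dist_ge[OF pk CP CP] bounds[OF CP] bounds[OF CP] that by fastforce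
  then have "inj_on center (corona P D)" using \<rho> by (intro inj_onI) fastforce
  then have infS: "infinite (center ` corona P D)" using inf finite_imageD by blast
  have "center ` corona P D \<subseteq> cball (center D) (radius D + R)"
  proof (rule image_subsetI)
    fix G assume G: "G \<in> corona P D"
    then show "center G \<in> cball (center D) (radius D + R)"
      using norm_corona_vector[OF G] bounds[OF CP[OF G]] by (simp add: dist_norm norm_minus_commute)
  qed
  then obtain x where "x islimpt center ` corona P D"
    using bounded_infinite_imp_islimpt[OF _ bounded_subset[OF bounded_cball] infS] by blast
  then have "infinite (center ` corona P D \<inter> ball x \<rho>)" using \<rho> islimpt_eq_infinite_ball by blast
  then obtain y1 y2 where y: "y1 \<in> center ` corona P D \<inter> ball x \<rho>"
    "y2 \<in> center ` corona P D \<inter> ball x \<rho>" "y1 \<noteq> y2"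
    by (metis finite.emptyI finite_insert infinite_imp_nonempty insert_iff subsetI finite_subset)
  then have "dist y1 y2 < 2 * \<rho>" using dist_triangle3[of y1 y2 x] by simp
  moreover obtain G1 G2 where "G1 \<in> corona P D" "G2 \<in> corona P D" "G1 \<noteq> G2"
    "y1 = center G1" "y2 = center G2" using y by auto
  then have "2 * \<rho> \<le> dist y1 y2" using sep by simp
  ultimately show False by simp
qed

lemma finite_sorted_enumeration:
  fixes f :: "'a \<Rightarrow> 'b::linorder"
  assumes "finite K" "inj_on f K"
  obtains L where "distinct L" "set L = K" "sorted_wrt (\<lambda>x y. f x < f y) L"
proof -
  interpret folding_insort_key "(\<le>)" "(<)" K f using assms(2) by unfold_locales
  obtain L where "sorted_wrt (<) (map f L)" "set L = K" "length L = card K"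
    using finite_set_strict_sorted[OF subset_refl assms(1)] by blast
  moreover from this have "distinct L" by (metis card_distinct)
  ultimately show ?thesis using that by (simp add: sorted_wrt_map)
qed

lemma corona_nonempty:
  assumes "compact_packing P" "D \<in> P"
  shows "corona P D \<noteq> {}"
  using corona_cone_around_direction[OF assms, of 1] by auto

lemma corona_angle_cone:
  assumes cp: "compact_packing P" and D: "D \<in> P"
    and avoid: "\<forall>G\<in>corona P D. \<forall>k::int. angle_at D G \<noteq> \<phi> + 2 * pi * of_int k"
  shows "\<exists>E\<in>corona P D. \<exists>F\<in>corona P D. tangent E F \<and>
     sin (angle_at D F - angle_at D E) > 0 \<and> sin (\<phi> - angle_at D E) > 0 \<and>
     sin (angle_at D F - \<phi>) > 0 \<and>
     (\<forall>G\<in>corona P D. \<not> (sin (angle_at D G - angle_at D E) > 0 \<and>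
                          sin (angle_at D F - angle_at D G) > 0))"
proof -
  have pk: "packing P" using cp unfolding compact_packing_def by simp
  define m where "m G = cmod (center G - center D)" for G
  have m: "m G > 0" if "G \<in> corona P D" for G
    using corona_vector_nonzero[OF pk D that] unfolding m_def by simp
  have polar: "center G - center D = rcis (m G) (angle_at D G)" for G
    unfolding m_def angle_at_def by (simp add: rcis_cmod_Arg)
  have nd: "\<forall>G\<in>corona P D. \<forall>l>0. cis \<phi> \<noteq> of_real l * (center G - center D)"
  proof (intro ballI allI impI notI)
    fix G l assume G: "G \<in> corona P D" and l: "(l::real) > 0"
      and eq: "cis \<phi> = of_real l * (center G - center D)"
    then have eq': "cis \<phi> = rcis (l * m G) (angle_at D G)" by (simp add: polar rcis_def)
    then have "l * m G = 1" using l m[OF G] by (metis abs_of_pos norm_cis complex_mod_rcis mult_pos_pos)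
    then have "cis \<phi> = cis (angle_at D G)" using eq' by (simp add: cis_rcis_eq)
    then have "sin (angle_at D G) = sin \<phi> \<and> cos (angle_at D G) = cos \<phi>" by (simp add: complex_eq_iff)
    then show False using avoid G sin_cos_eq_iff by blast
  qed
  obtain E F where EF: "E \<in> corona P D" "F \<in> corona P D" "tangent E F"
    and c: "cross (center E - center D) (center F - center D) > 0"
      "cross (center E - center D) (cis \<phi>) > 0" "cross (cis \<phi>) (center F - center D) > 0"
    and empty: "\<forall>G\<in>corona P D. \<not> (cross (center E - center D) (center G - center D) > 0 \<and>
                          cross (center G - center D) (center F - center D) > 0)"
    using corona_cone_around_direction[OF cp D _ nd] by auto
  have sin_iff: "cross (center X - center D) (center Y - center D) > 0 \<longleftrightarrow>
      sin (angle_at D Y - angle_at D X) > 0" if "X \<in> corona P D" "Y \<in> corona P D" for X Y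
    unfolding polar using cross_rcis_pos_iff m that by blast
  have "sin (\<phi> - angle_at D E) > 0" "sin (angle_at D F - \<phi>) > 0"
    using c(2,3) cross_rcis_pos_iff[of "m E" 1] cross_rcis_pos_iff[of 1 "m F"] m EF
    unfolding polar cis_rcis_eq by auto
  then show ?thesis using EF c(1) empty sin_iff by blast
qed

lemma corona_angular_gaps:
  assumes cp: "compact_packing P" and D: "D \<in> P" and L: "corona_in_angular_order P D L"
    and i: "i < length L"
  shows "tangent (L!i) (L!((i+1) mod length L)) \<and>
    0 < cyclic_gap (angle_at D) L i \<and> cyclic_gap (angle_at D) L i < pi"
proof -
  have setL: "set L = corona P D" and sorted: "sorted_wrt (\<lambda>E F. angle_at D E < angle_at D F) L"
    using L unfolding corona_in_angular_order_iff by auto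
  have Arg_range: "-pi < angle_at D G \<and> angle_at D G \<le> pi" for G
    unfolding angle_at_def by (rule Arg_bounded)
  show ?thesis
    using cyclic_gap_consecutive[OF Arg_range sorted, of tangent, OF _ i]
      cyclic_gap_pos[OF Arg_range sorted i] corona_angle_cone[OF cp D] unfolding setL by blast
qed

lemma cos_angle_at_tangent_neighbours:
  assumes pk: "packing P" and D: "D \<in> P"
    and EF: "E \<in> corona P D" "F \<in> corona P D" "tangent E F"
  shows "cos (angle_at D F - angle_at D E) =
    ((radius D + radius E)\<^sup>2 + (radius D + radius F)\<^sup>2 - (radius E + radius F)\<^sup>2) /
    (2 * (radius D + radius E) * (radius D + radius F))"
proof -
  have "cmod ((center E - center D) - (center F - center D)) = radius E + radius F"
    using EF(3) unfolding tangent_def by (simp add: dist_norm)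
  then show ?thesis
    using law_of_cosines_Arg[OF corona_vector_nonzero[OF pk D EF(1)] corona_vector_nonzero[OF pk D EF(2)]]
    unfolding angle_at_def norm_corona_vector[OF EF(1)] norm_corona_vector[OF EF(2)] by simp
qed

section \<open>Angles at the centre of an \<open>s\<close>-disc\<close>

text \<open>The cosine, by the law of cosines, of the angle at the centre of an \<open>s\<close>-disc between
  the centres of two mutually tangent \<open>e\<close>- and \<open>f\<close>-discs tangent to it.\<close>
definition contact_cos :: "real \<Rightarrow> real \<Rightarrow> real \<Rightarrow> real" where
  "contact_cos s e f = 1 - 2 * e * f / ((s + e) * (s + f))"

lemma law_of_cosines_contact_cos:
  fixes s e f :: real
  assumes "0 < s + e" "0 < s + f"
  shows "((s + e)\<^sup>2 + (s + f)\<^sup>2 - (e + f)\<^sup>2) / (2 * (s + e) * (s + f)) = contact_cos s e f"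
proof -
  define X where "X = (s + e) * (s + f)"
  have X: "X > 0" using assms unfolding X_def by simp
  have "(s + e)\<^sup>2 + (s + f)\<^sup>2 - (e + f)\<^sup>2 = 2 * X - 4 * e * f"
    unfolding X_def by (simp add: power2_eq_square algebra_simps)
  then have "((s + e)\<^sup>2 + (s + f)\<^sup>2 - (e + f)\<^sup>2) / (2 * (s + e) * (s + f)) = (2 * X - 4 * e * f) / (2 * X)"
    unfolding X_def by (simp add: mult.assoc)
  also have "\<dots> = 1 - 2 * e * f / X" using X by (simp add: diff_divide_distrib)
  finally show ?thesis unfolding contact_cos_def X_def .
qed

lemma contact_cos_equal_radii: "0 < s \<Longrightarrow> contact_cos s s s = 1 / 2"
  unfolding contact_cos_def by (simp add: field_simps)

lemma contact_cos_less_half: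
  fixes s e f :: real
  assumes "0 < s" "s \<le> e" "s \<le> f" "\<not> (e = s \<and> f = s)"
  shows "contact_cos s e f < 1 / 2"
proof -
  have "(s + e) * (s + f) < (2 * e) * (2 * f)"
  proof (cases "e = s")
    case True
    then show ?thesis using assms by (intro mult_le_less_imp_less) auto
  next
    case False
    then show ?thesis using assms by (intro mult_less_le_imp_less) auto
  qed
  moreover have "0 < (s + e) * (s + f)" using assms by simp
  ultimately show ?thesis unfolding contact_cos_def by (simp add: less_divide_eq)
qed

lemma contact_cos_pos:
  fixes s e f :: real
  assumes "0 < s" "0 < e" "0 < f" "e = s \<or> f = s"
  shows "0 < contact_cos s e f"
proof -
  have "2 * e * f < (s + e) * (s + f)" using assms by (auto simp: algebra_simps)
  moreover have "0 < (s + e) * (s + f)" using assms by simp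
  ultimately show ?thesis unfolding contact_cos_def by (simp add: divide_less_eq)
qed

lemma contact_angle_bounds:
  fixes s e f g :: real
  assumes "0 < s" "s \<le> e" "s \<le> f" "0 < g" "g < pi" and cos: "cos g = contact_cos s e f"
  shows "(e = s \<and> f = s \<longrightarrow> g = pi / 3) \<and> (\<not> (e = s \<and> f = s) \<longrightarrow> pi / 3 < g) \<and>
    (e = s \<or> f = s \<longrightarrow> g < pi / 2)"
proof (intro conjI impI)
  assume "e = s \<and> f = s"
  then have "cos g = cos (pi / 3)" using cos contact_cos_equal_radii assms(1) by (simp add: cos_60)
  then show "g = pi / 3" using assms(4,5) cos_inj_pi[of g "pi / 3"] by simp
next
  assume "\<not> (e = s \<and> f = s)"
  then have "cos g < cos (pi / 3)" using cos contact_cos_less_half assms(1-3) by (simp add: cos_60)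
  then show "pi / 3 < g" using assms(4,5) cos_mono_less_eq[of g "pi / 3"] by simp
next
  assume "e = s \<or> f = s"
  then have "cos (pi / 2) < cos g" using cos contact_cos_pos[of s e f] assms(1-3) by simp
  then show "g < pi / 2" using assms(4,5) cos_mono_less_eq[of "pi / 2" g] by simp
qed

section \<open>Admissible words\<close>

text \<open>An upper bound, in units of \<open>\<pi>/6\<close>, for the angle at the centre of an \<open>s\<close>-disc
  between two consecutive neighbours with the given letters (attained only for two
  \<open>s\<close>-discs).  As these angles add up to \<open>2\<pi>\<close> and each is at least \<open>\<pi>/3\<close>, the
  bounds of an \<open>s\<close>-corona must add up to more than 12 unless all angles are \<open>\<pi>/3\<close>.\<close>
definition angle_bound :: "char \<Rightarrow> char \<Rightarrow> nat" where
  "angle_bound x y =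
     (if x = CHR ''s'' \<and> y = CHR ''s'' then 2 else if x = CHR ''s'' \<or> y = CHR ''s'' then 3 else 6)"

definition admissible_s_corona :: "string \<Rightarrow> bool" where
  "admissible_s_corona w \<longleftrightarrow>
     (if \<forall>c\<in>set w. c = CHR ''s'' then length w = 6
      else length w < 6 \<and> 12 < (\<Sum>i<length w. angle_bound (w!i) (w!((i+1) mod length w))))"

definition listed_s_corona :: "string \<Rightarrow> bool" where
  "listed_s_corona w \<longleftrightarrow>
     (\<exists>k\<in>set [0..<length w]. \<exists>v\<in>set s_corona_words. rotate k w = v \<or> rotate k (rev w) = v)"

text \<open>Decided by evaluation; filtering first spares evaluating \<open>listed_s_corona\<close> on
  inadmissible words.\<close>
lemma short_admissible_s_coronas_listed:
  "\<forall>n\<in>set [0..<6]. \<forall>w\<in>set (filter admissible_s_corona (List.n_lists n ''1rs'')). listed_s_corona w"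
  by code_simp

lemma listed_s_corona_ssssss: "listed_s_corona (replicate 6 (CHR ''s''))"
  by code_simp

definition angle_fits :: "char \<Rightarrow> char \<Rightarrow> real \<Rightarrow> bool" where
  "angle_fits x y g \<longleftrightarrow>
     (if x = CHR ''s'' \<and> y = CHR ''s'' then g = pi / 3
      else pi / 3 < g \<and> g < real (angle_bound x y) * pi / 6)"

lemma admissible_s_corona_if_angles:
  fixes w :: string and g :: "nat \<Rightarrow> real"
  assumes sum: "(\<Sum>i<length w. g i) = 2 * pi"
    and fits: "\<And>i. i < length w \<Longrightarrow> angle_fits (w!i) (w!((i+1) mod length w)) (g i)"
  shows "admissible_s_corona w"
proof -
  define n where "n = length w"
  define ss where "ss i \<longleftrightarrow> w!i = CHR ''s'' \<and> w!((i+1) mod n) = CHR ''s''" for i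
  define b where "b i = real (angle_bound (w!i) (w!((i+1) mod n)))" for i
  define h where "h i = 6 * g i / pi" for i
  have "(\<Sum>i<n. h i) = 6 / pi * (\<Sum>i<n. g i)" unfolding h_def by (simp add: sum_distrib_left)
  then have sumh: "(\<Sum>i<n. h i) = 12" using sum unfolding n_def by simp
  have h: "2 \<le> h i \<and> h i \<le> b i \<and> (ss i \<longrightarrow> h i = 2) \<and> (\<not> ss i \<longrightarrow> 2 < h i \<and> h i < b i)"
    if "i < n" for i
    using fits[of i] that unfolding angle_fits_def ss_def b_def h_def n_def angle_bound_def
    by (auto simp: field_simps)
  show ?thesis
  proof (cases "\<forall>c\<in>set w. c = CHR ''s''")
    case True
    have "ss i" if "i < n" for i
    proof -
      have "(i + 1) mod n < n" using that by simp
      then show ?thesis using True that nth_mem[of i w] nth_mem[of "(i + 1) mod n" w]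
        unfolding ss_def n_def by simp
    qed
    then have "(\<Sum>i<n. h i) = 2 * n" using h by simp
    then show ?thesis using True sumh unfolding admissible_s_corona_def n_def by simp
  next
    case False
    then obtain j where j: "j < n" "\<not> ss j" unfolding ss_def n_def by (auto simp: in_set_conv_nth)
    have "(\<Sum>i<n. 2) < (\<Sum>i<n. h i)"
      using h j by (intro sum_strict_mono_ex1) auto
    then have "n < 6" using sumh by simp
    moreover have "(\<Sum>i<n. h i) < (\<Sum>i<n. b i)"
      using h j by (intro sum_strict_mono_ex1) auto
    then have "12 < real (\<Sum>i<n. angle_bound (w!i) (w!((i+1) mod n)))"
      using sumh unfolding b_def by (simp add: of_nat_sum)
    then have "12 < (\<Sum>i<n. angle_bound (w!i) (w!((i+1) mod n)))" by linarith
    ultimately show ?thesis using False unfolding admissible_s_corona_def n_def by simp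
  qed
qed

lemma admissible_s_corona_listed:
  assumes adm: "admissible_s_corona w" and letters: "set w \<subseteq> set ''1rs''"
  shows "listed_s_corona w"
proof (cases "\<forall>c\<in>set w. c = CHR ''s''")
  case True
  then have "replicate (length w) (CHR ''s'') = w" by (rule replicate_length_same)
  moreover have "length w = 6" using True adm unfolding admissible_s_corona_def by simp
  ultimately show ?thesis using listed_s_corona_ssssss by metis
next
  case False
  then have "length w \<in> set [0..<6]" using adm unfolding admissible_s_corona_def by simp
  moreover have "w \<in> set (List.n_lists (length w) ''1rs'')" using letters by (simp add: set_n_lists)
  ultimately show ?thesis using short_admissible_s_coronas_listed adm by auto
qed

lemma listed_s_corona_cyc_equiv:
  assumes "listed_s_corona w"
  shows "\<exists>v\<in>set s_corona_words. cyc_equiv (word r s w) (word r s v)"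
  using assms unfolding listed_s_corona_def cyc_equiv_def word_def by (auto simp: rotate_map rev_map)

section \<open>Coronas of \<open>s\<close>-discs\<close>

definition radius_letter :: "real \<Rightarrow> real \<Rightarrow> char" where
  "radius_letter r x = (if x = 1 then CHR ''1'' else if x = r then CHR ''r'' else CHR ''s'')"

lemma letter_radius_letter:
  assumes "s < r" "r < 1" "x \<in> {1, r, s}"
  shows "letter r s (radius_letter r x) = x"
  using assms unfolding radius_letter_def letter_def by auto

lemma radius_letter_eq_s_iff:
  assumes "s < r" "r < 1" "x \<in> {1, r, s}"
  shows "radius_letter r x = CHR ''s'' \<longleftrightarrow> x = s"
  using assms unfolding radius_letter_def by auto

lemma s_corona_angle_fits:
  assumes s: "0 < s" "s < r" "r < 1" and cp: "compact_packing P"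
    and rad: "\<forall>G\<in>P. radius G \<in> {1, r, s}" and D: "D \<in> P" "radius D = s"
    and L: "corona_in_angular_order P D L" and i: "i < length L"
  defines "E \<equiv> L!i" and "F \<equiv> L!((i+1) mod length L)"
  shows "angle_fits (radius_letter r (radius E)) (radius_letter r (radius F))
           (cyclic_gap (angle_at D) L i)"
proof -
  have pk: "packing P" using cp unfolding compact_packing_def by simp
  have gap: "tangent E F" "0 < cyclic_gap (angle_at D) L i" "cyclic_gap (angle_at D) L i < pi"
    using corona_angular_gaps[OF cp D(1) L i] unfolding E_def F_def by auto
  have "set L = corona P D" using L unfolding corona_in_angular_order_def by simp
  then have EF: "E \<in> corona P D" "F \<in> corona P D"
    using i unfolding E_def F_def by (auto simp flip: \<open>set L = corona P D\<close> intro!: nth_mem mod_less_divisor)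
  then have radEF: "radius E \<in> {1, r, s}" "radius F \<in> {1, r, s}"
    using rad unfolding corona_def by auto
  then have "s \<le> radius E" "s \<le> radius F" using s by auto
  moreover have "cos (cyclic_gap (angle_at D) L i) = contact_cos s (radius E) (radius F)"
    using cos_cyclic_gap[OF i, of "angle_at D"] cos_angle_at_tangent_neighbours[OF pk D(1) EF gap(1)]
      law_of_cosines_contact_cos[of s "radius E" "radius F"] \<open>s \<le> radius E\<close> \<open>s \<le> radius F\<close> s D(2)
    unfolding E_def F_def by simp
  ultimately have "(radius E = s \<and> radius F = s \<longrightarrow> cyclic_gap (angle_at D) L i = pi / 3) \<and>
      (\<not> (radius E = s \<and> radius F = s) \<longrightarrow> pi / 3 < cyclic_gap (angle_at D) L i) \<and>
      (radius E = s \<or> radius F = s \<longrightarrow> cyclic_gap (angle_at D) L i < pi / 2)"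
    using contact_angle_bounds[OF s(1) _ _ gap(2,3)] by blast
  then show ?thesis
    unfolding angle_fits_def angle_bound_def
      radius_letter_eq_s_iff[OF s(2,3) radEF(1)] radius_letter_eq_s_iff[OF s(2,3) radEF(2)]
    using gap(3) by auto
qed

lemma s_corona_listed:
  assumes s: "0 < s" "s < r" "r < 1" and cp: "compact_packing P"
    and rad: "\<forall>G\<in>P. radius G \<in> {1, r, s}" and D: "D \<in> P" "radius D = s"
  shows "\<exists>L. corona_in_angular_order P D L \<and>
           (\<exists>v\<in>set s_corona_words. cyc_equiv (coding L) (word r s v))"
proof -
  have pk: "packing P" using cp unfolding compact_packing_def by simp
  have "finite (corona P D)" using finite_corona[OF pk D(1) s(1), of 1] rad s by fastforce
  then obtain L where L: "corona_in_angular_order P D L"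
    using finite_sorted_enumeration[OF _ inj_on_angle_at_corona[OF pk D(1)]]
    unfolding corona_in_angular_order_iff by metis
  then have setL: "set L = corona P D" unfolding corona_in_angular_order_def by simp
  define w where "w = map (radius_letter r \<circ> radius) L"
  have "coding L = word r s w"
    using letter_radius_letter[OF s(2,3)] rad setL
    unfolding coding_def word_def w_def corona_def by (auto intro!: map_idI)
  moreover have "admissible_s_corona w"
  proof (rule admissible_s_corona_if_angles)
    have "L \<noteq> []" using corona_nonempty[OF cp D(1)] setL by auto
    then show "(\<Sum>i<length w. cyclic_gap (angle_at D) L i) = 2 * pi"
      using sum_cyclic_gap unfolding w_def by simp
  next
    fix i assume i: "i < length w"
    then have "(i + 1) mod length L < length L" unfolding w_def by (intro mod_less_divisor) auto
    then show "angle_fits (w!i) (w!((i+1) mod length w)) (cyclic_gap (angle_at D) L i)"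
      using s_corona_angle_fits[OF s cp rad D L] i unfolding w_def by simp
  qed
  moreover have "set w \<subseteq> set ''1rs''" unfolding w_def radius_letter_def by auto
  ultimately show ?thesis
    using L admissible_s_corona_listed listed_s_corona_cyc_equiv by metis
qed

theorem mainTheorem3:
  fixes r s :: real and P :: "disc set"
  assumes "0 < s" and "s < r" and "r < 1"
    and "compact_packing P"
    and "\<forall>D\<in>P. radius D \<in> {1, r, s}"
  shows "\<forall>D\<in>P. radius D = s \<longrightarrow>
           (\<exists>L. corona_in_angular_order P D L \<and>
                (\<exists>w\<in>set s_corona_words. cyc_equiv (coding L) (word r s w)))"
  using s_corona_listed[OF assms] by blast

end
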